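(* Let $A\in\mathbb{R}^{n\times n}$ be symmetric positive definite with eigenvalues $0<\lambda_1\le\cdots\le\lambda_n$, $\lambda_1<\lambda_n$, and a corresponding orthonormal basis of eigenvectors $v_1,\dots,v_n$, let $c\in\mathbb{R}^n$, and consider the Barzilai--Borwein (BB) method applied to $\min_{x\in\mathbb{R}^n}\frac12x^\top Ax-c^\top x$, started from an arbitrary $x_0\in\mathbb{R}^n$. Let $g_k=Ax_k-c$, write $g_k=\sum_{i=1}^n d_k^iv_i$, let $\kappa=\lambda_n/\lambda_1$ and $\theta=1-\frac1\kappa$. For $i=1,\dots,n$ let $C_i=\max\left\{\frac{\lambda_i}{\lambda_1}-1,\ 1-\frac{\lambda_i}{\lambda_n}\right\}$ and define recursively $$F_1=|d_0^1|,\qquad F_i=\max\left\{|d_0^i|,\ \frac{|d_1^i|}{\theta},\ \theta^{-2}C_i^2\sqrt{\textstyle\sum_{j=1}^{i-1}F_j^2}\right\}\quad(i\ge2).$$ Then for every $k\ge1$ and every $i=1,\dots,n$, $|d_k^i|\le F_i\theta^k$; in particular each sequence $\{d_k^i\}$ converges to $0$ at least $R$-linearly with rate $\theta=1-\frac1\kappa$.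
   Context: The BB method for this problem: $x_1=x_0-\alpha_0 g_0$ with the exact line-search (steepest descent) step $\alpha_0=\frac{g_0^\top g_0}{g_0^\top A g_0}$, and for $k\ge1$, $x_{k+1}=x_k-\alpha_k g_k$ with $\alpha_k=\frac{s_{k-1}^\top s_{k-1}}{s_{k-1}^\top y_{k-1}}$, $s_{k-1}=x_k-x_{k-1}$, $y_{k-1}=g_k-g_{k-1}$; for this quadratic this equals $\alpha_k=\frac{g_{k-1}^\top g_{k-1}}{g_{k-1}^\top A g_{k-1}}$. Equivalently, the coefficients satisfy $d_1^i=d_0^i\cdot\frac{\sum_{j}(\lambda_j-\lambda_i)(d_0^j)^2}{\sum_j\lambda_j(d_0^j)^2}$ and $d_{k+1}^i=d_k^i\cdot\frac{\sum_{j}(\lambda_j-\lambda_i)(d_{k-1}^j)^2}{\sum_j\lambda_j(d_{k-1}^j)^2}$ for $k\ge1$. Convention: if some gradient vanishes, the method has reached the minimizer and all subsequent gradients (coefficients) are taken to be zero. *)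

theory Defs
  imports "HOL-Analysis.Analysis"
begin

text \<open>Barzilai--Borwein iteration for f(x) = 1/2 x'Ax - c'x, gradient g(x) = Ax - c.
  bb_pair A c x0 k = (x_k, x_{k+1}).  The first step uses the exact line-search step
  alpha_0 = g0'g0 / g0'A g0, later steps alpha_k = s'(s) / s'(y) with
  s = x_k - x_{k-1}, y = g_k - g_{k-1}.  (Division by zero gives 0 in HOL, so once a
  gradient vanishes the iterates stay put and all later gradients are zero.)\<close>

definition bb_grad :: "real^'n^'n \<Rightarrow> real^'n \<Rightarrow> real^'n \<Rightarrow> real^'n" where
  "bb_grad A c x = A *v x - c"

fun bb_pair :: "real^'n^'n \<Rightarrow> real^'n \<Rightarrow> real^'n \<Rightarrow> nat \<Rightarrow> (real^'n) \<times> (real^'n)" where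
  "bb_pair A c x0 0 =
     (let g0 = bb_grad A c x0;
          \<alpha>0 = (g0 \<bullet> g0) / (g0 \<bullet> (A *v g0))
      in (x0, x0 - \<alpha>0 *\<^sub>R g0))"
| "bb_pair A c x0 (Suc k) =
     (let (xp, xc) = bb_pair A c x0 k;
          s = xc - xp;
          y = bb_grad A c xc - bb_grad A c xp;
          \<alpha> = (s \<bullet> s) / (s \<bullet> y)
      in (xc, xc - \<alpha> *\<^sub>R bb_grad A c xc))"

definition bb_iter :: "real^'n^'n \<Rightarrow> real^'n \<Rightarrow> real^'n \<Rightarrow> nat \<Rightarrow> real^'n" where
  "bb_iter A c x0 k = fst (bb_pair A c x0 k)"

definition bb_coeff :: "real^'n^'n \<Rightarrow> real^'n \<Rightarrow> real^'n \<Rightarrow> (nat \<Rightarrow> real^'n) \<Rightarrow> nat \<Rightarrow> nat \<Rightarrow> real" where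
  "bb_coeff A c x0 v k i = bb_grad A c (bb_iter A c x0 k) \<bullet> v i"

text \<open>The recursively defined bounds F_i (indices shifted to start at 0):
  Fsq d0 d1 C \<theta> i = sum of F_j^2 for j < i.\<close>
fun Fsq :: "(nat \<Rightarrow> real) \<Rightarrow> (nat \<Rightarrow> real) \<Rightarrow> (nat \<Rightarrow> real) \<Rightarrow> real \<Rightarrow> nat \<Rightarrow> real"
and Fbound :: "(nat \<Rightarrow> real) \<Rightarrow> (nat \<Rightarrow> real) \<Rightarrow> (nat \<Rightarrow> real) \<Rightarrow> real \<Rightarrow> nat \<Rightarrow> real" where
  "Fsq d0 d1 C \<theta> 0 = 0"
| "Fsq d0 d1 C \<theta> (Suc i) = Fsq d0 d1 C \<theta> i + (Fbound d0 d1 C \<theta> i)\<^sup>2"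
| "Fbound d0 d1 C \<theta> 0 = \<bar>d0 0\<bar>"
| "Fbound d0 d1 C \<theta> (Suc i) =
     max \<bar>d0 (Suc i)\<bar> (max (\<bar>d1 (Suc i)\<bar> / \<theta>)
        (\<theta> powi (-2) * (C (Suc i))\<^sup>2 * sqrt (Fsq d0 d1 C \<theta> (Suc i))))"

end

theory Submission
  imports Defs
begin

text \<open>The coefficients satisfy d(k+1,i) = d(k,i) (1 - \<alpha>(k) \<lambda>(i)), where \<alpha>(k) is the exact
  line-search step for the gradient g(k-1), so that 1/\<alpha>(k) is the mean of the eigenvalues weighted
  by d(k-1,j)^2. Hence the factor 1 - \<alpha>(k) \<lambda>(i) is at most \<theta>, and it is negative only through
  the weight of the eigenvalues below \<lambda>(i): it is at least
  -C(i) (\<Sum>j<i. d(k-1,j)^2) / (\<Sum>j. d(k-1,j)^2).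
  So at every step either |d(k+1,i)| \<le> \<theta> |d(k,i)|, or, combining the factors of two consecutive
  steps, |d(k+1,i)| \<le> C(i)^2 sqrt (\<Sum>j<i. d(k-1,j)^2).\<close>

lemma symmetric_matrix_inner:
  fixes A :: "real^'n^'n"
  assumes "transpose A = A"
  shows "(A *v x) \<bullet> y = x \<bullet> (A *v y)"
  by (metis assms dot_lmul_matrix transpose_matrix_vector)

lemma orthonormal_family_expansion:
  fixes v :: "nat \<Rightarrow> 'a::euclidean_space"
  assumes orth: "\<And>i j. i < DIM('a) \<Longrightarrow> j < DIM('a) \<Longrightarrow> v i \<bullet> v j = (if i = j then 1 else 0)"
  shows "y = (\<Sum>j<DIM('a). (y \<bullet> v j) *\<^sub>R v j)"
proof -
  let ?B = "v ` {..<DIM('a)}"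
  have "inj_on v {..<DIM('a)}"
    by (rule inj_onI) (metis orth lessThan_iff zero_neq_one)
  then have card: "card ?B = DIM('a)"
    by (simp add: card_image)
  have "pairwise orthogonal ?B"
    using orth by (auto simp: pairwise_def orthogonal_def)
  moreover have "0 \<notin> ?B"
    using orth by (auto simp: image_iff) (metis inner_zero_left zero_neq_one)
  ultimately have "independent ?B"
    by (rule pairwise_orthogonal_independent)
  then have span: "span ?B = UNIV"
    by (metis card dim_eq_card dim_eq_full)
  define r where "r = y - (\<Sum>j<DIM('a). (y \<bullet> v j) *\<^sub>R v j)"
  have "r \<bullet> v i = 0" if "i < DIM('a)" for i
  proof -
    have "(\<Sum>j<DIM('a). (y \<bullet> v j) * (v j \<bullet> v i)) = (\<Sum>j<DIM('a). if j = i then y \<bullet> v i else 0)"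
      by (intro sum.cong refl) (simp add: orth that)
    then show ?thesis
      using that by (simp add: r_def inner_diff_left inner_sum_left)
  qed
  then have "orthogonal r r"
    by (intro orthogonal_to_span[of r ?B]) (auto simp: orthogonal_def span)
  then show ?thesis
    by (simp add: r_def orthogonal_def)
qed

lemma orthonormal_family_inner:
  fixes v :: "nat \<Rightarrow> 'a::euclidean_space"
  assumes "\<And>i j. i < DIM('a) \<Longrightarrow> j < DIM('a) \<Longrightarrow> v i \<bullet> v j = (if i = j then 1 else 0)"
  shows "x \<bullet> y = (\<Sum>j<DIM('a). (x \<bullet> v j) * (y \<bullet> v j))"
proof -
  have "x \<bullet> y = x \<bullet> (\<Sum>j<DIM('a). (y \<bullet> v j) *\<^sub>R v j)"
    using orthonormal_family_expansion[OF assms] by metis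
  then show ?thesis
    by (simp add: inner_sum_right mult.commute)
qed

lemma weighted_sum_bounds:
  fixes w l :: "nat \<Rightarrow> real"
  assumes w: "\<And>j. j < n \<Longrightarrow> 0 \<le> w j"
    and l: "\<And>i j. i \<le> j \<Longrightarrow> j < n \<Longrightarrow> l i \<le> l j"
  shows "l 0 * (\<Sum>j<n. w j) \<le> (\<Sum>j<n. l j * w j)"
    and "(\<Sum>j<n. l j * w j) \<le> l (n - 1) * (\<Sum>j<n. w j)"
  unfolding sum_distrib_left
  by (intro sum_mono mult_right_mono; use w l in simp)+

lemma weighted_step_factor_bounds:
  fixes w l :: "nat \<Rightarrow> real"
  assumes w: "\<And>j. j < n \<Longrightarrow> 0 \<le> w j"
    and l: "\<And>i j. i \<le> j \<Longrightarrow> j < n \<Longrightarrow> l i \<le> l j"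
    and l0: "0 < l 0" and S0: "0 < (\<Sum>j<n. w j)" and i: "i < n"
  defines "f \<equiv> 1 - l i * (\<Sum>j<n. w j) / (\<Sum>j<n. l j * w j)"
  shows "f \<le> 1 - l i / l (n - 1)"
    and "- (l i / l 0 - 1) * ((\<Sum>j<i. w j) / (\<Sum>j<n. w j)) \<le> f"
proof -
  define S where "S = (\<Sum>j<n. w j)"
  define T where "T = (\<Sum>j<n. l j * w j)"
  define Sl where "Sl = (\<Sum>j<i. w j)"
  note mean = weighted_sum_bounds[of n w l, OF w l, folded S_def T_def]
  have li: "l 0 \<le> l i" "l i \<le> l (n - 1)"
    using l[of 0 i] l[of i "n - 1"] i by auto
  have S: "0 < S"
    using S0 by (simp add: S_def)
  then have T: "0 < T"
    using l0 mean(1) by (meson mult_pos_pos order.strict_trans2)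
  show "f \<le> 1 - l i / l (n - 1)"
    using mean(2) S T l0 li unfolding f_def S_def[symmetric] T_def[symmetric]
    by (simp add: field_simps mult_left_mono)
  have "f * T = (\<Sum>j<n. (l j - l i) * w j)"
    using T by (simp add: f_def S_def T_def field_simps sum_subtractf sum_distrib_left)
  also have "\<dots> \<ge> (\<Sum>j<i. (l j - l i) * w j)"
  proof -
    have split: "{..<n} = {..<i} \<union> {i..<n}"
      using i by auto
    have "0 \<le> (\<Sum>j\<in>{i..<n}. (l j - l i) * w j)"
      by (intro sum_nonneg) (simp add: l w)
    then show ?thesis
      unfolding split by (subst sum.union_disjoint) auto
  qed
  also have "(\<Sum>j<i. (l j - l i) * w j) \<ge> - (l i - l 0) * Sl"
    unfolding Sl_def sum_distrib_left
    by (intro sum_mono) (use i l w in \<open>auto intro: mult_right_mono\<close>)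
  finally have "- ((l i - l 0) * Sl / T) \<le> f"
    using T by (simp add: field_simps)
  moreover have "(l i - l 0) * Sl / T \<le> (l i - l 0) * Sl / (l 0 * S)"
    using mean(1) S T l0 li i w
    by (intro divide_left_mono mult_nonneg_nonneg) (auto simp: Sl_def intro: sum_nonneg)
  ultimately have "- ((l i - l 0) * Sl / (l 0 * S)) \<le> f"
    by linarith
  moreover have "- ((l i - l 0) * Sl / (l 0 * S)) = - (l i / l 0 - 1) * (Sl / S)"
    using l0 by (simp add: field_simps)
  ultimately show "- (l i / l 0 - 1) * (Sl / S) \<le> f"
    by simp
qed

lemma abs_mult_ratio_le_sqrt:
  fixes e S Sl :: real
  assumes "e\<^sup>2 \<le> S" "0 \<le> Sl" "Sl \<le> S"
  shows "\<bar>e\<bar> * (Sl / S) \<le> sqrt Sl"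
proof (cases "S = 0")
  case False
  then have S: "0 < S"
    using assms by linarith
  have "\<bar>e\<bar> \<le> sqrt S"
    using assms(1) real_le_rsqrt by (simp add: real_sqrt_abs[symmetric] del: real_sqrt_abs)
  moreover have "Sl / S \<le> sqrt (Sl / S)"
    using assms S by (intro real_le_rsqrt) (auto simp: power2_eq_square field_simps mult_right_mono)
  ultimately have "\<bar>e\<bar> * (Sl / S) \<le> sqrt S * sqrt (Sl / S)"
    using assms S by (intro mult_mono) auto
  then show ?thesis
    using S by (simp add: real_sqrt_divide)
qed (use assms in simp)

lemma Fsq_eq_sum: "Fsq d0 d1 C \<theta> i = (\<Sum>j<i. (Fbound d0 d1 C \<theta> j)\<^sup>2)"
  by (induction i) auto

lemma abs_le_Fbound: "\<bar>d0 i\<bar> \<le> Fbound d0 d1 C \<theta> i"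
  by (cases i) auto

lemma sqrt_sum_square_le_Fsq:
  fixes e :: "nat \<Rightarrow> real"
  assumes "\<And>j. j < i \<Longrightarrow> \<bar>e j\<bar> \<le> Fbound d0 d1 C \<theta> j * t" and "0 \<le> t"
  shows "sqrt (\<Sum>j<i. (e j)\<^sup>2) \<le> t * sqrt (Fsq d0 d1 C \<theta> i)"
proof -
  have "(\<Sum>j<i. (e j)\<^sup>2) \<le> (\<Sum>j<i. (Fbound d0 d1 C \<theta> j * t)\<^sup>2)"
  proof (intro sum_mono)
    fix j
    assume "j \<in> {..<i}"
    then have "\<bar>e j\<bar> \<le> \<bar>Fbound d0 d1 C \<theta> j * t\<bar>"
      using assms by fastforce
    then show "(e j)\<^sup>2 \<le> (Fbound d0 d1 C \<theta> j * t)\<^sup>2"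
      by (simp only: abs_le_square_iff)
  qed
  also have "\<dots> = t\<^sup>2 * Fsq d0 d1 C \<theta> i"
    by (simp add: Fsq_eq_sum sum_distrib_left power_mult_distrib mult_ac)
  finally show ?thesis
    using assms(2) by (metis real_sqrt_le_mono real_sqrt_mult real_sqrt_abs abs_of_nonneg)
qed

lemma abs_le_Fbound_mult_power:
  fixes d :: "nat \<Rightarrow> nat \<Rightarrow> real"
  assumes \<theta>: "0 < \<theta>"
    and step: "\<And>k i. i < n \<Longrightarrow> \<bar>d (Suc k) i\<bar> \<le> \<theta> * \<bar>d k i\<bar> \<or>
        (0 < i \<and> (0 < k \<longrightarrow> \<bar>d (Suc k) i\<bar> \<le> (C i)\<^sup>2 * sqrt (\<Sum>j<i. (d (k - 1) j)\<^sup>2)))"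
    and "i < n"
  shows "\<bar>d k i\<bar> \<le> Fbound (d 0) (d 1) C \<theta> i * \<theta> ^ k"
  using \<open>i < n\<close>
proof (induction i arbitrary: k rule: less_induct)
  case (less i)
  let ?F = "Fbound (d 0) (d 1) C \<theta>"
  show ?case
  proof (induction k)
    case 0
    show ?case
      by (simp add: abs_le_Fbound)
  next
    case (Suc k)
    from step[OF less.prems, of k] show ?case
    proof (elim disjE conjE)
      assume "\<bar>d (Suc k) i\<bar> \<le> \<theta> * \<bar>d k i\<bar>"
      also have "\<dots> \<le> \<theta> * (?F i * \<theta> ^ k)"
        using Suc.IH \<theta> by (intro mult_left_mono) auto
      finally show ?thesis
        by (simp add: mult_ac)
    next
      assume "0 < i" and two_step: "0 < k \<longrightarrow> \<bar>d (Suc k) i\<bar> \<le> (C i)\<^sup>2 * sqrt (\<Sum>j<i. (d (k - 1) j)\<^sup>2)"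
      then obtain i' where i: "i = Suc i'"
        by (cases i) auto
      show ?thesis
      proof (cases k)
        case 0
        have "\<bar>d 1 i\<bar> / \<theta> \<le> ?F i"
          using i by simp
        then show ?thesis
          using 0 \<theta> by (simp add: field_simps)
      next
        case (Suc m)
        have "sqrt (\<Sum>j<i. (d m j)\<^sup>2) \<le> \<theta> ^ m * sqrt (Fsq (d 0) (d 1) C \<theta> i)"
          using less.IH less.prems \<theta> by (intro sqrt_sum_square_le_Fsq) auto
        then have "\<bar>d (Suc k) i\<bar> \<le> (C i)\<^sup>2 * (\<theta> ^ m * sqrt (Fsq (d 0) (d 1) C \<theta> i))"
          using two_step Suc by (simp add: order_trans[OF _ mult_left_mono])
        also have "\<dots> = (\<theta> powi (-2) * (C i)\<^sup>2 * sqrt (Fsq (d 0) (d 1) C \<theta> i)) * \<theta> ^ Suc k"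
          using Suc \<theta> by (simp add: power_int_minus field_simps power2_eq_square)
        also have "\<dots> \<le> ?F i * \<theta> ^ Suc k"
          using i \<theta> by (intro mult_right_mono) auto
        finally show ?thesis .
      qed
    qed
  qed
qed

definition cauchy_step :: "real^'n^'n \<Rightarrow> real^'n \<Rightarrow> real" where
  "cauchy_step A y = (y \<bullet> y) / (y \<bullet> (A *v y))"

lemma cauchy_step_scaleR: "cauchy_step A (a *\<^sub>R y) = (if a = 0 then 0 else cauchy_step A y)"
  by (simp add: cauchy_step_def matrix_vector_mult_scaleR power2_eq_square[symmetric])

lemma bb_grad_diff_scaleR: "bb_grad A c (x - a *\<^sub>R y) = bb_grad A c x - a *\<^sub>R (A *v y)"
  by (simp add: bb_grad_def matrix_vector_mult_diff_distrib matrix_vector_mult_scaleR)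

lemma bb_pair_eq: "bb_pair A c x0 k = (bb_iter A c x0 k, bb_iter A c x0 (Suc k))"
proof -
  have "fst (bb_pair A c x0 (Suc k)) = snd (bb_pair A c x0 k)"
    by (simp add: Let_def case_prod_beta)
  then show ?thesis
    unfolding bb_iter_def by (metis prod.collapse)
qed

lemma bb_iter_0 [simp]: "bb_iter A c x0 0 = x0"
  by (simp add: bb_iter_def Let_def)

lemma bb_iter_1: "bb_iter A c x0 (Suc 0) = x0 - cauchy_step A (bb_grad A c x0) *\<^sub>R bb_grad A c x0"
  by (simp add: bb_iter_def cauchy_step_def Let_def)

lemma bb_iter_Suc_Suc:
  "bb_iter A c x0 (Suc (Suc k)) = bb_iter A c x0 (Suc k)
     - cauchy_step A (bb_iter A c x0 (Suc k) - bb_iter A c x0 k) *\<^sub>R bb_grad A c (bb_iter A c x0 (Suc k))"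
  using bb_pair_eq[of A c x0 "Suc k"]
  by (simp add: bb_pair_eq[of A c x0 k] cauchy_step_def Let_def bb_grad_def matrix_vector_mult_diff_distrib)

locale pos_def_matrix =
  fixes A :: "real^'n^'n"
  assumes posdef: "\<And>x. x \<noteq> 0 \<Longrightarrow> x \<bullet> (A *v x) > 0"
begin

lemma cauchy_step_eq_0_iff: "cauchy_step A y = 0 \<longleftrightarrow> y = 0"
  using posdef[of y] by (cases "y = 0") (auto simp: cauchy_step_def)

text \<open>For \<open>k = 0\<close> the truncated index \<open>k - 1 = 0\<close> yields the exact line-search step of the
  first iteration, so a single formula covers all steps.\<close>

lemma bb_iter_Suc:
  "bb_iter A c x0 (Suc k) = bb_iter A c x0 k
           - cauchy_step A (bb_grad A c (bb_iter A c x0 (k - 1))) *\<^sub>R bb_grad A c (bb_iter A c x0 k)"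
proof (induction k rule: less_induct)
  case (less k)
  let ?x = "bb_iter A c x0"
  let ?g = "\<lambda>k. bb_grad A c (bb_iter A c x0 k)"
  show ?case
  proof (cases k)
    case 0
    then show ?thesis
      by (simp add: bb_iter_1)
  next
    case (Suc m)
    define a where "a = cauchy_step A (?g (m - 1))"
    have step_m: "?x (Suc m) = ?x m - a *\<^sub>R ?g m"
      using less.IH[of m] Suc by (simp add: a_def)
    have "cauchy_step A (?x (Suc m) - ?x m) *\<^sub>R ?g (Suc m) = cauchy_step A (?g m) *\<^sub>R ?g (Suc m)"
    proof (cases "a = 0")
      case True
      then have "?g (m - 1) = 0"
        using cauchy_step_eq_0_iff by (simp add: a_def)
      have "?g m = 0"
      proof (cases m)
        case (Suc p)
        with less.IH[of p] \<open>k = Suc m\<close> \<open>?g (m - 1) = 0\<close> show ?thesis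
          by (simp add: bb_grad_diff_scaleR)
      qed (use \<open>?g (m - 1) = 0\<close> in simp)
      then show ?thesis
        using step_m True by simp
    next
      case False
      have "?x (Suc m) - ?x m = (- a) *\<^sub>R ?g m"
        using step_m by simp
      then show ?thesis
        using False by (simp only: cauchy_step_scaleR) simp
    qed
    then show ?thesis
      using bb_iter_Suc_Suc[of A c x0 m] Suc by simp
  qed
qed

lemma bb_grad_Suc:
  "bb_grad A c (bb_iter A c x0 (Suc k)) = bb_grad A c (bb_iter A c x0 k)
           - cauchy_step A (bb_grad A c (bb_iter A c x0 (k - 1))) *\<^sub>R (A *v bb_grad A c (bb_iter A c x0 k))"
  unfolding bb_iter_Suc by (rule bb_grad_diff_scaleR)

lemma bb_grad_eq_0_mono:
  assumes "bb_grad A c (bb_iter A c x0 m) = 0" "m \<le> k"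
  shows "bb_grad A c (bb_iter A c x0 k) = 0"
  using \<open>m \<le> k\<close>
proof (induction k rule: dec_induct)
  case (step k)
  then show ?case
    using bb_grad_Suc[of c x0 k] by simp
qed (fact assms(1))

end

locale spd_eigensystem = pos_def_matrix A for A :: "real^'n^'n" +
  fixes lam :: "nat \<Rightarrow> real" and v :: "nat \<Rightarrow> real^'n" and \<theta> :: real and C :: "nat \<Rightarrow> real"
  assumes sym: "transpose A = A"
    and eig: "\<And>i. i < CARD('n) \<Longrightarrow> A *v v i = lam i *\<^sub>R v i"
    and orth: "\<And>i j. i < CARD('n) \<Longrightarrow> j < CARD('n) \<Longrightarrow> v i \<bullet> v j = (if i = j then 1 else 0)"
    and sorted: "\<And>i j. i \<le> j \<Longrightarrow> j < CARD('n) \<Longrightarrow> lam i \<le> lam j"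
    and pos: "0 < lam 0"
    and distinct: "lam 0 < lam (CARD('n) - 1)"
    and theta_eq: "\<theta> = 1 - lam 0 / lam (CARD('n) - 1)"
    and C_eq: "C i = max (lam i / lam 0 - 1) (1 - lam i / lam (CARD('n) - 1))"
begin

lemma rate_pos: "0 < \<theta>"
  using pos distinct by (simp add: theta_eq)

lemma inner_eigenvector: "i < CARD('n) \<Longrightarrow> (A *v y) \<bullet> v i = lam i * (y \<bullet> v i)"
  by (simp add: symmetric_matrix_inner[OF sym] eig)

lemma inner_self_eq_sum: "y \<bullet> y = (\<Sum>j<CARD('n). (y \<bullet> v j)\<^sup>2)"
  using orthonormal_family_inner[of v y y] orth by (simp add: power2_eq_square)

lemma quadratic_form_eq_sum: "y \<bullet> (A *v y) = (\<Sum>j<CARD('n). lam j * (y \<bullet> v j)\<^sup>2)"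
  using orthonormal_family_inner[of v y "A *v y"] orth
  by (simp add: inner_eigenvector power2_eq_square mult_ac)

lemma step_factor_bounds:
  assumes "y \<noteq> 0" "i < CARD('n)"
  defines "f \<equiv> 1 - cauchy_step A y * lam i"
  shows "f \<le> \<theta>" and "\<bar>f\<bar> \<le> C i"
    and "- f \<le> C i * ((\<Sum>j<i. (y \<bullet> v j)\<^sup>2) / (\<Sum>j<CARD('n). (y \<bullet> v j)\<^sup>2))"
proof -
  let ?w = "\<lambda>j. (y \<bullet> v j)\<^sup>2"
  let ?lmax = "lam (CARD('n) - 1)"
  have S: "0 < (\<Sum>j<CARD('n). ?w j)"
    using assms(1) by (simp flip: inner_self_eq_sum)
  have f: "f = 1 - lam i * (\<Sum>j<CARD('n). ?w j) / (\<Sum>j<CARD('n). lam j * ?w j)"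
    by (simp add: f_def cauchy_step_def inner_self_eq_sum quadratic_form_eq_sum)
  have bounds: "f \<le> 1 - lam i / ?lmax"
    "- (lam i / lam 0 - 1) * ((\<Sum>j<i. ?w j) / (\<Sum>j<CARD('n). ?w j)) \<le> f"
    unfolding f using weighted_step_factor_bounds[of "CARD('n)" ?w lam i] sorted pos S assms(2)
    by auto
  have "0 \<le> (\<Sum>j<i. ?w j)" "(\<Sum>j<i. ?w j) \<le> (\<Sum>j<CARD('n). ?w j)"
    using assms(2) by (auto intro!: sum_nonneg sum_mono2)
  then have ratio: "0 \<le> (\<Sum>j<i. ?w j) / (\<Sum>j<CARD('n). ?w j)" "(\<Sum>j<i. ?w j) / (\<Sum>j<CARD('n). ?w j) \<le> 1"
    using S by auto
  have li: "lam 0 \<le> lam i" "lam i \<le> ?lmax"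
    using sorted[of 0 i] sorted[of i "CARD('n) - 1"] assms(2) by auto
  have "1 - lam i / ?lmax \<le> \<theta>"
    using li pos by (simp add: theta_eq divide_right_mono)
  then show "f \<le> \<theta>"
    using bounds(1) by simp
  have "0 \<le> lam i / lam 0 - 1"
    using li pos by simp
  with ratio(2) have "(lam i / lam 0 - 1) * ((\<Sum>j<i. ?w j) / (\<Sum>j<CARD('n). ?w j)) \<le> lam i / lam 0 - 1"
    by (rule mult_left_le)
  then show "\<bar>f\<bar> \<le> C i"
    using bounds unfolding C_eq by linarith
  have "(lam i / lam 0 - 1) * ((\<Sum>j<i. ?w j) / (\<Sum>j<CARD('n). ?w j))
      \<le> C i * ((\<Sum>j<i. ?w j) / (\<Sum>j<CARD('n). ?w j))"
    using ratio(1) by (intro mult_right_mono) (simp_all add: C_eq)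
  with bounds(2) show "- f \<le> C i * ((\<Sum>j<i. ?w j) / (\<Sum>j<CARD('n). ?w j))"
    by linarith
qed

lemma bb_coeff_Suc:
  assumes "i < CARD('n)"
  shows "bb_coeff A c x0 v (Suc k) i
           = bb_coeff A c x0 v k i * (1 - cauchy_step A (bb_grad A c (bb_iter A c x0 (k - 1))) * lam i)"
  using assms by (simp add: bb_coeff_def bb_grad_Suc inner_eigenvector algebra_simps)

lemma bb_coeff_overshoot_bound:
  fixes c x0 :: "real^'n"
  assumes i: "i < CARD('n)"
    and g: "bb_grad A c (bb_iter A c x0 m) \<noteq> 0"
    and overshoot: "1 - cauchy_step A (bb_grad A c (bb_iter A c x0 m)) * lam i < 0"
  defines "d \<equiv> bb_coeff A c x0 v"
  shows "\<bar>d (Suc (Suc m)) i\<bar> \<le> (C i)\<^sup>2 * sqrt (\<Sum>j<i. (d m j)\<^sup>2)"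
proof -
  let ?g = "\<lambda>k. bb_grad A c (bb_iter A c x0 k)"
  let ?S = "\<Sum>j<CARD('n). (d m j)\<^sup>2" and ?Sl = "\<Sum>j<i. (d m j)\<^sup>2"
  define f where "f k = 1 - cauchy_step A (?g (k - 1)) * lam i" for k
  have d_Suc: "d (Suc k) i = d k i * f k" for k
    using bb_coeff_Suc[OF i] by (simp add: d_def f_def)
  have "?g (m - 1) \<noteq> 0"
    using g bb_grad_eq_0_mono[of c x0 "m - 1" m] by auto
  then have previous: "\<bar>f m\<bar> \<le> C i"
    using step_factor_bounds(2)[OF _ i] by (simp add: f_def)
  have current: "\<bar>f (Suc m)\<bar> \<le> C i * (?Sl / ?S)"
    using step_factor_bounds(3)[OF g i] overshoot by (simp add: f_def d_def bb_coeff_def)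
  have "(d m i)\<^sup>2 \<le> ?S"
    using i by (intro member_le_sum) auto
  moreover have "?Sl \<le> ?S"
    using i by (intro sum_mono2) auto
  ultimately have ratio: "\<bar>d m i\<bar> * (?Sl / ?S) \<le> sqrt ?Sl"
    by (intro abs_mult_ratio_le_sqrt) (simp_all add: sum_nonneg)
  have "\<bar>d (Suc (Suc m)) i\<bar> = \<bar>d m i\<bar> * \<bar>f m\<bar> * \<bar>f (Suc m)\<bar>"
    by (simp add: d_Suc abs_mult)
  also have "\<dots> \<le> \<bar>d m i\<bar> * C i * (C i * (?Sl / ?S))"
    using previous current by (intro mult_mono mult_left_mono) auto
  also have "\<dots> = (C i)\<^sup>2 * (\<bar>d m i\<bar> * (?Sl / ?S))"
    by (simp add: power2_eq_square mult_ac)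
  also have "\<dots> \<le> (C i)\<^sup>2 * sqrt ?Sl"
    using ratio by (intro mult_left_mono) auto
  finally show ?thesis .
qed

lemma bb_coeff_dichotomy:
  fixes c x0 :: "real^'n"
  assumes i: "i < CARD('n)"
  defines "d \<equiv> bb_coeff A c x0 v"
  shows "\<bar>d (Suc k) i\<bar> \<le> \<theta> * \<bar>d k i\<bar> \<or>
    (0 < i \<and> (0 < k \<longrightarrow> \<bar>d (Suc k) i\<bar> \<le> (C i)\<^sup>2 * sqrt (\<Sum>j<i. (d (k - 1) j)\<^sup>2)))"
proof -
  let ?g = "bb_grad A c (bb_iter A c x0 (k - 1))"
  define f where "f = 1 - cauchy_step A ?g * lam i"
  consider (vanished) "?g = 0" | (contracting) "?g \<noteq> 0" "0 \<le> f" | (overshooting) "?g \<noteq> 0" "f < 0"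
    by linarith
  then show ?thesis
  proof cases
    case vanished
    then have "d (Suc k) i = 0"
      using bb_grad_eq_0_mono[of c x0 "k - 1" "Suc k"] by (simp add: d_def bb_coeff_def)
    then show ?thesis
      using rate_pos by simp
  next
    case contracting
    have "\<bar>d (Suc k) i\<bar> = \<bar>d k i\<bar> * f"
      using contracting bb_coeff_Suc[OF i] by (simp add: d_def f_def abs_mult)
    also have "\<dots> \<le> \<bar>d k i\<bar> * \<theta>"
      using step_factor_bounds(1)[OF contracting(1) i] by (intro mult_left_mono) (simp_all add: f_def)
    finally show ?thesis
      by (simp add: mult.commute)
  next
    case overshooting
    have "0 < i"
      using step_factor_bounds(3)[OF overshooting(1) i] overshooting(2) by (cases i) (auto simp: f_def)
    moreover have "\<bar>d (Suc k) i\<bar> \<le> (C i)\<^sup>2 * sqrt (\<Sum>j<i. (d (k - 1) j)\<^sup>2)" if "0 < k"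
    proof -
      obtain m where "k = Suc m"
        using \<open>0 < k\<close> by (cases k) auto
      then show ?thesis
        using bb_coeff_overshoot_bound[OF i, of c x0 m] overshooting by (simp add: d_def f_def)
    qed
    ultimately show ?thesis
      by blast
  qed
qed

end

theorem theorem1:
  fixes A :: "real^'n^'n" and c x0 :: "real^'n"
    and lam :: "nat \<Rightarrow> real" and v :: "nat \<Rightarrow> real^'n"
  assumes sym: "transpose A = A"
    and posdef: "\<And>x. x \<noteq> 0 \<Longrightarrow> x \<bullet> (A *v x) > 0"
    and eig: "\<And>i. i < CARD('n) \<Longrightarrow> A *v v i = lam i *\<^sub>R v i"
    and orth: "\<And>i j. i < CARD('n) \<Longrightarrow> j < CARD('n) \<Longrightarrow> v i \<bullet> v j = (if i = j then 1 else 0)"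
    and sorted: "\<And>i j. i \<le> j \<Longrightarrow> j < CARD('n) \<Longrightarrow> lam i \<le> lam j"
    and pos: "0 < lam 0"
    and distinct: "lam 0 < lam (CARD('n) - 1)"
  defines "d \<equiv> bb_coeff A c x0 v"
    and "\<theta> \<equiv> 1 - 1 / (lam (CARD('n) - 1) / lam 0)"
    and "C \<equiv> (\<lambda>i. max (lam i / lam 0 - 1) (1 - lam i / lam (CARD('n) - 1)))"
  shows "(\<forall>k\<ge>1. \<forall>i<CARD('n). \<bar>d k i\<bar> \<le> Fbound (d 0) (d 1) C \<theta> i * \<theta> ^ k)
         \<and> (\<forall>i<CARD('n). (\<lambda>k. d k i) \<longlonglongrightarrow> 0)"
proof -
  interpret spd_eigensystem A lam v \<theta> C
    by unfold_locales (use assms in auto)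
  have bound: "\<bar>d k i\<bar> \<le> Fbound (d 0) (d 1) C \<theta> i * \<theta> ^ k" if "i < CARD('n)" for k i
    unfolding d_def by (rule abs_le_Fbound_mult_power[OF rate_pos bb_coeff_dichotomy[of _ c x0] that])
  have "(\<lambda>k. d k i) \<longlonglongrightarrow> 0" if "i < CARD('n)" for i
  proof (rule Lim_null_comparison)
    show "\<forall>\<^sub>F k in sequentially. norm (d k i) \<le> Fbound (d 0) (d 1) C \<theta> i * \<theta> ^ k"
      using bound[OF that] by simp
    have "\<theta> < 1"
      using pos distinct by (simp add: theta_eq)
    then show "(\<lambda>k. Fbound (d 0) (d 1) C \<theta> i * \<theta> ^ k) \<longlonglongrightarrow> 0"
      using rate_pos by (intro tendsto_mult_right_zero LIMSEQ_power_zero) auto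
  qed
  with bound show ?thesis
    by blast
qed

end
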